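(* For every object $\mathcal{X}=(A_0,A_1,A_\infty,\widetilde{M_0},\widetilde{M_\infty})$ of the category $\mathcal{C}$ of connections there exist finite subsets $E_0\subset D(0,1)\setminus\{0\}$ and $E_\infty\subset\mathbb{C}\setminus\overline{D}(0,1)$ such that $\mathcal{X}$ is an object of $\mathcal{C}_{E_0,E_\infty}$, i.e. $S(\widetilde{M_0})\subset\widetilde{E_0}$ and $S(\widetilde{M_\infty})\subset\widetilde{E_\infty}$.
   Context: Fix an integer $p\ge2$. Let $\widetilde{\mathbb{C}^\star}=\{(re^{ib},b): r>0, b\in\mathbb{R}\}$, $\widetilde{\log}(re^{ib},b)=\log r+ib$, $\pi=\exp\circ\widetilde{\log}$, $\phi_p(re^{ib},b)=(r^pe^{ipb},pb)$; $\phi_p(W)=W\circ\phi_p$, $\pi^\star W=W\circ\pi$. $\Sigma_0=\{(re^{ib},b):0<r<1\}$, $\Sigma_\infty=\{(re^{ib},b):r>1\}$. An object of $\mathcal{C}$ of rank $n$ is a tuple $(A_0,A_1,A_\infty,\widetilde{M_0},\widetilde{M_\infty})$ with $A_i\in GL_n(\mathbb{C})$, $\widetilde{M_0}\in GL_n(\mathcal{M}(\Sigma_0))$, $\widetilde{M_\infty}\in GL_n(\mathcal{M}(\Sigma_\infty))$, $\phi_p(\widetilde{M_0})=A_1\widetilde{M_0}A_0^{-1}$, $\phi_p(\widetilde{M_\infty})=A_1\widetilde{M_\infty}A_\infty^{-1}$, such that there exist $\widetilde{W_1}\in GL_n(\mathcal{M}(\widetilde{\mathbb{C}^\star}))$,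 $W_0\in GL_n(\mathcal{M}(D(0,1)))$, $W_\infty\in GL_n(\mathcal{M}(\mathbb{P}^1(\mathbb{C})\setminus\overline{D}(0,1)))$ with $\widetilde{W_1}\widetilde{M_0}=\pi^\star W_0$ and $\widetilde{W_1}\widetilde{M_\infty}=\pi^\star W_\infty$. For finite $E\subset\mathbb{C}^\star$, $E^{p^k}=\{z^{p^k}:z\in E\}$ ($k\ge0$), $E^{p^k}=\{z:z^{p^{-k}}\in E\}$ ($k<0$), $\widetilde E=\pi^{-1}(\bigcup_{k\in\mathbb{Z}}E^{p^k})$. The singular locus $S(M)$ of a meromorphic matrix $M$ is the set of its poles together with the zeros of $\det M$. *)

theory Defs
  imports "HOL-Complex_Analysis.Complex_Analysis"
begin

definition ctilde :: "(complex \<times> real) set" where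
  "ctilde = {(z, b). \<exists>r>0. z = complex_of_real r * cis b}"

definition ltilde :: "complex \<times> real \<Rightarrow> complex" where
  "ltilde x = complex_of_real (ln (norm (fst x))) + \<i> * complex_of_real (snd x)"

definition lexp :: "complex \<Rightarrow> complex \<times> real" where
  "lexp w = (exp w, Im w)"

definition piT :: "complex \<times> real \<Rightarrow> complex" where
  "piT x = fst x"

definition phiT :: "nat \<Rightarrow> complex \<times> real \<Rightarrow> complex \<times> real" where
  "phiT p x = (fst x ^ p, real p * snd x)"

definition Sigma0 :: "(complex \<times> real) set" where
  "Sigma0 = {x \<in> ctilde. norm (fst x) < 1}"

definition SigmaInf :: "(complex \<times> real) set" where
  "SigmaInf = {x \<in> ctilde. norm (fst x) > 1}"

definition mero_cov :: "(complex \<times> real \<Rightarrow> complex) \<Rightarrow> (complex \<times> real) set \<Rightarrow> bool" where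
  "mero_cov f U \<longleftrightarrow> (f \<circ> lexp) meromorphic_on (ltilde ` U)"

definition mero_eq_cov :: "(complex \<times> real \<Rightarrow> 'a) \<Rightarrow> (complex \<times> real \<Rightarrow> 'a) \<Rightarrow> (complex \<times> real) set \<Rightarrow> bool" where
  "mero_eq_cov f g U \<longleftrightarrow> (\<forall>w \<in> ltilde ` U. \<forall>\<^sub>F u in at w. f (lexp u) = g (lexp u))"

text \<open>GL_n(M(U)) on the cover: meromorphic entries, determinant invertible in M(U)
  (its germ is not zero at any point).\<close>
definition GL_mero_cov :: "(complex \<times> real \<Rightarrow> complex^'n^'n) \<Rightarrow> (complex \<times> real) set \<Rightarrow> bool" where
  "GL_mero_cov M U \<longleftrightarrow>
     (\<forall>i j. mero_cov (\<lambda>x. M x $ i $ j) U) \<and>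
     (\<forall>w \<in> ltilde ` U. \<not> (\<forall>\<^sub>F u in at w. det (M (lexp u)) = 0))"

definition GL_mero :: "(complex \<Rightarrow> complex^'n^'n) \<Rightarrow> complex set \<Rightarrow> bool" where
  "GL_mero M V \<longleftrightarrow>
     (\<forall>i j. (\<lambda>z. M z $ i $ j) meromorphic_on V) \<and>
     (\<forall>w \<in> V. \<not> (\<forall>\<^sub>F u in at w. det (M u) = 0))"

text \<open>GL_n(M(P^1 \ closed disc)): meromorphic on |z|>1 and at infinity
  (via the coordinate 1/z at 0).\<close>
definition GL_mero_inf :: "(complex \<Rightarrow> complex^'n^'n) \<Rightarrow> bool" where
  "GL_mero_inf M \<longleftrightarrow>
     GL_mero M {z. norm z > 1} \<and>
     (\<forall>i j. (\<lambda>z. M (inverse z) $ i $ j) meromorphic_on {0}) \<and>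
     \<not> (\<forall>\<^sub>F u in at 0. det (M (inverse u)) = 0)"

definition is_object_C ::
  "nat \<Rightarrow> complex^'n^'n \<Rightarrow> complex^'n^'n \<Rightarrow> complex^'n^'n \<Rightarrow>
   (complex \<times> real \<Rightarrow> complex^'n^'n) \<Rightarrow> (complex \<times> real \<Rightarrow> complex^'n^'n) \<Rightarrow> bool" where
  "is_object_C p A0 A1 Ainf M0 Minf \<longleftrightarrow>
     invertible A0 \<and> invertible A1 \<and> invertible Ainf \<and>
     GL_mero_cov M0 Sigma0 \<and> GL_mero_cov Minf SigmaInf \<and>
     mero_eq_cov (\<lambda>x. M0 (phiT p x)) (\<lambda>x. A1 ** M0 x ** matrix_inv A0) Sigma0 \<and>
     mero_eq_cov (\<lambda>x. Minf (phiT p x)) (\<lambda>x. A1 ** Minf x ** matrix_inv Ainf) SigmaInf \<and>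
     (\<exists>W1 W0 Winf.
        GL_mero_cov W1 ctilde \<and> GL_mero W0 (ball 0 1) \<and> GL_mero_inf Winf \<and>
        mero_eq_cov (\<lambda>x. W1 x ** M0 x) (\<lambda>x. W0 (piT x)) Sigma0 \<and>
        mero_eq_cov (\<lambda>x. W1 x ** Minf x) (\<lambda>x. Winf (piT x)) SigmaInf)"

definition sing_locus :: "(complex \<times> real \<Rightarrow> complex^'n^'n) \<Rightarrow> (complex \<times> real) set \<Rightarrow> (complex \<times> real) set" where
  "sing_locus M U = {x \<in> U.
      (\<exists>i j. is_pole (\<lambda>u. M (lexp u) $ i $ j) (ltilde x)) \<or>
      ((\<lambda>u. det (M (lexp u))) \<longlongrightarrow> 0) (at (ltilde x))}"

definition Epow :: "nat \<Rightarrow> complex set \<Rightarrow> int \<Rightarrow> complex set" where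
  "Epow p E k = (if k \<ge> 0 then (\<lambda>z. z ^ (p ^ nat k)) ` E
                 else {z. z ^ (p ^ nat (- k)) \<in> E})"

definition Etilde :: "nat \<Rightarrow> complex set \<Rightarrow> (complex \<times> real) set" where
  "Etilde p E = {x \<in> ctilde. piT x \<in> (\<Union>k::int. Epow p E k)}"

end

theory Submission
  imports Defs
begin

(* In the chart u = ltilde x of the cover, Sigma0 is the half plane Re u < 0, phiT p is
   u |-> p u and piT is exp. Writing m, w, V for M0, W1, W0 in this chart, we have
   m (p u) = A1 m(u) A0^-1 and w m = V o exp, with w meromorphic on all of C and V on the
   unit disc. The matrix

     T u = V (exp (p u)) A0 V (exp u)^-1 = w (p u) A1 w(u)^-1

   depends only on exp u; it is regular far to the left, where V o exp is, and otherwise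
   singular only where w is singular at u or at p u. Hence the singularities of T in the half
   plane are mapped by exp onto a finite set Tsing. As m = w^-1 (V o exp), a singularity of m
   is one of w or of V o exp. Where T is regular, the first formula for T pushes a singularity
   of w at u down to u / p, and the second pushes a singularity of V o exp at u out to p u.
   Since w is regular on a punctured neighbourhood of 0 and V o exp far to the left, the
   iteration must stop at a singularity of T, so exp u is a p^k-th power or a p^k-th root of a
   point of Tsing. At infinity the same argument applies after u |-> -u and z |-> 1/z. *)

section \<open>Continuity of the matrix inverse\<close>

lemma matrix_inv_det_nz:
  fixes A :: "'a::field^'n^'n"
  assumes "det A \<noteq> 0"
  shows "A ** matrix_inv A = mat 1" "matrix_inv A ** A = mat 1"
proof -
  have "\<exists>B. A ** B = mat 1 \<and> B ** A = mat 1"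
    using assms invertible_det_nz unfolding invertible_def by blast
  from someI_ex[OF this] show "A ** matrix_inv A = mat 1" "matrix_inv A ** A = mat 1"
    unfolding matrix_inv_def by auto
qed

lemma matrix_inv_cramer:
  fixes A :: "'a::field^'n^'n"
  assumes "det A \<noteq> 0"
  shows "matrix_inv A $ k $ j =
           det (\<chi> i l. if l = k then (mat 1 :: 'a^'n^'n) $ i $ j else A $ i $ l) / det A"
proof -
  have "A *v (\<chi> l. matrix_inv A $ l $ j) = (\<chi> i. (mat 1 :: 'a^'n^'n) $ i $ j)"
    using matrix_inv_det_nz(1)[OF assms]
    by (simp add: vec_eq_iff matrix_vector_mult_def matrix_matrix_mult_def)
  then have "(\<chi> l. matrix_inv A $ l $ j) $ k =
      det (\<chi> i l. if l = k then (\<chi> i. (mat 1 :: 'a^'n^'n) $ i $ j) $ i else A $ i $ l) / det A"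
    unfolding cramer[OF assms] by (simp only: vec_lambda_beta)
  then show ?thesis by (simp only: vec_lambda_beta)
qed

lemma tendsto_det:
  fixes F :: "'b \<Rightarrow> 'a::real_normed_field^'n^'n"
  assumes "(F \<longlongrightarrow> L) net"
  shows "((\<lambda>x. det (F x)) \<longlongrightarrow> det L) net"
  unfolding det_def by (intro tendsto_intros assms)

lemma tendsto_matrix_matrix_mult:
  fixes F G :: "'b \<Rightarrow> 'a::real_normed_field^'n^'n"
  assumes "(F \<longlongrightarrow> L) net" "(G \<longlongrightarrow> M) net"
  shows "((\<lambda>x. F x ** G x) \<longlongrightarrow> L ** M) net"
  unfolding matrix_matrix_mult_def
  by (intro vec_tendstoI) (simp, intro tendsto_intros assms)

lemma tendsto_matrix_inv:
  fixes F :: "'b \<Rightarrow> 'a::real_normed_field^'n^'n"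
  assumes F: "(F \<longlongrightarrow> L) net" and L: "det L \<noteq> 0"
  shows "((\<lambda>x. matrix_inv (F x)) \<longlongrightarrow> matrix_inv L) net"
proof (intro vec_tendstoI)
  fix k j
  let ?C = "\<lambda>A :: 'a^'n^'n. \<chi> i l. if l = k then (mat 1 :: 'a^'n^'n) $ i $ j else A $ i $ l"
  have "\<forall>\<^sub>F x in net. det (F x) \<noteq> 0"
    using tendsto_imp_eventually_ne[OF tendsto_det[OF F] L] .
  then have "\<forall>\<^sub>F x in net. det (?C (F x)) / det (F x) = matrix_inv (F x) $ k $ j"
    by eventually_elim (simp add: matrix_inv_cramer)
  moreover have "((\<lambda>x. ?C (F x)) \<longlongrightarrow> ?C L) net"
    by (intro vec_tendstoI) (auto intro: tendsto_vec_nth[OF tendsto_vec_nth[OF F]])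
  then have "((\<lambda>x. det (?C (F x)) / det (F x)) \<longlongrightarrow> matrix_inv L $ k $ j) net"
    unfolding matrix_inv_cramer[OF L] by (intro tendsto_divide tendsto_det F L)
  ultimately show "((\<lambda>x. matrix_inv (F x) $ k $ j) \<longlongrightarrow> matrix_inv L $ k $ j) net"
    by (rule tendsto_cong[THEN iffD1])
qed

section \<open>Invertible limits of matrix-valued functions\<close>

(* Only the germ of F at u matters, so junk values of F at its singularities are harmless;
   for meromorphic F this fails exactly on the singular locus. *)
definition has_invertible_limit ::
  "('b::topological_space \<Rightarrow> 'a::real_normed_field^'n^'n) \<Rightarrow> 'b \<Rightarrow> bool" where
  "has_invertible_limit F u \<longleftrightarrow> (\<exists>L. (F \<longlongrightarrow> L) (at u) \<and> det L \<noteq> 0)"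

definition continuous_invertible_at ::
  "('b::t2_space \<Rightarrow> 'a::real_normed_field^'n^'n) \<Rightarrow> 'b \<Rightarrow> bool" where
  "continuous_invertible_at F u \<longleftrightarrow> isCont F u \<and> det (F u) \<noteq> 0"

lemma continuous_invertible_at_imp_has_invertible_limit:
  "continuous_invertible_at F u \<Longrightarrow> has_invertible_limit F u"
  unfolding continuous_invertible_at_def has_invertible_limit_def isCont_def by blast

lemma continuous_invertible_at_compose:
  "isCont f u \<Longrightarrow> continuous_invertible_at F (f u) \<Longrightarrow> continuous_invertible_at (\<lambda>v. F (f v)) u"
  unfolding continuous_invertible_at_def using isCont_o2 by blast

lemma has_invertible_limit_eventually_det_nz:
  "has_invertible_limit F u \<Longrightarrow> \<forall>\<^sub>F v in at u. det (F v) \<noteq> 0"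
  unfolding has_invertible_limit_def using tendsto_det tendsto_imp_eventually_ne by blast

lemma has_invertible_limit_const: "det A \<noteq> 0 \<Longrightarrow> has_invertible_limit (\<lambda>_. A) u"
  unfolding has_invertible_limit_def by auto

lemma has_invertible_limit_mult:
  "has_invertible_limit F u \<Longrightarrow> has_invertible_limit G u \<Longrightarrow>
     has_invertible_limit (\<lambda>v. F v ** G v) u"
  unfolding has_invertible_limit_def by (auto simp: det_mul intro!: tendsto_matrix_matrix_mult)

lemma has_invertible_limit_matrix_inv:
  assumes "has_invertible_limit F u"
  shows "has_invertible_limit (\<lambda>v. matrix_inv (F v)) u"
proof -
  obtain L where L: "(F \<longlongrightarrow> L) (at u)" "det L \<noteq> 0"
    using assms unfolding has_invertible_limit_def by blast
  have "det L * det (matrix_inv L) = 1"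
    using matrix_inv_det_nz(1)[OF L(2)] by (metis det_mul det_I)
  then show ?thesis
    unfolding has_invertible_limit_def using tendsto_matrix_inv[OF L] by force
qed

lemma has_invertible_limit_cong:
  "has_invertible_limit F u \<Longrightarrow> \<forall>\<^sub>F v in at u. F v = G v \<Longrightarrow> has_invertible_limit G u"
  unfolding has_invertible_limit_def using tendsto_cong by blast

lemma has_invertible_limit_compose:
  "has_invertible_limit F (f u) \<Longrightarrow> filterlim f (at (f u)) (at u) \<Longrightarrow>
     has_invertible_limit (\<lambda>v. F (f v)) u"
  unfolding has_invertible_limit_def using filterlim_compose by blast

lemma has_invertible_limit_not_pole:
  fixes F :: "'b::perfect_space \<Rightarrow> 'a::real_normed_field^'n^'n"
  assumes "has_invertible_limit F u"
  shows "\<not> is_pole (\<lambda>v. F v $ i $ j) u"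
proof -
  obtain L where "(F \<longlongrightarrow> L) (at u)" using assms unfolding has_invertible_limit_def by blast
  then have "((\<lambda>v. F v $ i $ j) \<longlongrightarrow> L $ i $ j) (at u)" by (intro tendsto_vec_nth)
  then show ?thesis
    unfolding is_pole_def using not_tendsto_and_filterlim_at_infinity[of "at u"] by auto
qed

lemma has_invertible_limit_not_det_tendsto_0:
  fixes F :: "'b::perfect_space \<Rightarrow> 'a::real_normed_field^'n^'n"
  assumes "has_invertible_limit F u"
  shows "\<not> ((\<lambda>v. det (F v)) \<longlongrightarrow> 0) (at u)"
proof
  obtain L where L: "(F \<longlongrightarrow> L) (at u)" "det L \<noteq> 0"
    using assms unfolding has_invertible_limit_def by blast
  assume "((\<lambda>v. det (F v)) \<longlongrightarrow> 0) (at u)"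
  with tendsto_det[OF L(1)] L(2) show False using tendsto_unique[of "at u"] by auto
qed

lemma filterlim_at_if_inj_on:
  assumes "isCont f u" "inj_on f S" "open S" "u \<in> S"
  shows "filterlim f (at (f u)) (at u)"
proof (rule filterlim_atI)
  show "(f \<longlongrightarrow> f u) (at u)" using assms(1) by (rule isContD)
  from eventually_at_in_open[OF assms(3,4)] show "\<forall>\<^sub>F v in at u. f v \<noteq> f u"
    by eventually_elim (use assms(2,4) in \<open>auto simp: inj_on_def\<close>)
qed

lemma filterlim_times_at:
  fixes c :: "'a::real_normed_field"
  assumes "c \<noteq> 0"
  shows "filterlim (times c) (at (c * u)) (at u)"
  using assms by (intro filterlim_at_if_inj_on[of _ _ UNIV]) (auto simp: inj_on_def)

lemma filterlim_plus_at:
  fixes c :: "'a::real_normed_vector"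
  shows "filterlim (\<lambda>y. y + c) (at (u + c)) (at u)"
  by (intro filterlim_at_if_inj_on[of _ _ UNIV]) (auto simp: inj_on_def)

lemma filterlim_uminus_at: "filterlim uminus (at (- u)) (at (u::'a::real_normed_vector))"
  unfolding filterlim_def filtermap_at_minus by simp

lemma filterlim_inverse_at:
  fixes z :: "'a::real_normed_field"
  assumes "z \<noteq> 0"
  shows "filterlim inverse (at (inverse z)) (at z)"
  using assms
  by (intro filterlim_at_if_inj_on[of _ _ UNIV] continuous_intros) (auto simp: inj_on_def)

lemma filterlim_exp_at: "filterlim exp (at (exp u)) (at (u::complex))"
  by (rule filterlim_at_if_inj_on[OF _ inj_on_exp_pi[of u]]) (auto intro: continuous_intros)

lemma eventually_continuous_invertible_at_meromorphic:
  fixes F :: "complex \<Rightarrow> complex^'n^'n"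
  assumes mero: "\<forall>i j. (\<lambda>u. F u $ i $ j) meromorphic_on {z}"
    and det_not_0: "\<not> (\<forall>\<^sub>F u in at z. det (F u) = 0)"
  shows "\<forall>\<^sub>F v in at z. continuous_invertible_at F v"
proof -
  have "\<forall>\<^sub>F v in at z. (\<lambda>u. F u $ i $ j) analytic_on {v}" for i j
    using meromorphic_on_imp_analytic_cosparse[of "\<lambda>u. F u $ i $ j" "{z}"] mero
    by (auto intro: eventually_cosparse_imp_eventually_at)
  then have analytic: "\<forall>\<^sub>F v in at z. \<forall>i j. (\<lambda>u. F u $ i $ j) analytic_on {v}"
    by (intro eventually_all_finite)
  have "(\<lambda>u. det (F u)) meromorphic_on {z}"
    unfolding det_def using mero by (intro meromorphic_intros) auto
  then have "\<forall>\<^sub>F v in at z. det (F v) \<noteq> 0"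
    using det_not_0 not_essential_frequently_0_imp_eventually_0
      meromorphic_on_isolated_singularity meromorphic_on_not_essential
    unfolding frequently_def by blast
  with analytic show ?thesis
  proof eventually_elim
    case (elim v)
    then have "isCont F v"
      unfolding isCont_def by (intro vec_tendstoI) (use analytic_at_imp_isCont isContD in blast)
    with elim show ?case unfolding continuous_invertible_at_def by blast
  qed
qed

lemma GL_mero_eventually_continuous_invertible_at:
  assumes "GL_mero M V" "z \<in> V"
  shows "\<forall>\<^sub>F v in at z. continuous_invertible_at M v"
  using assms unfolding GL_mero_def
  by (intro eventually_continuous_invertible_at_meromorphic)
     (auto intro: meromorphic_on_subset)

lemma GL_mero_inf_eventually_continuous_invertible_at_inverse:
  assumes W: "GL_mero_inf W" and z: "z \<in> ball 0 1"
  shows "\<forall>\<^sub>F y in at z. continuous_invertible_at (\<lambda>y. W (inverse y)) y"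
proof (cases "z = 0")
  case True
  then show ?thesis
    using W unfolding GL_mero_inf_def
    by (intro eventually_continuous_invertible_at_meromorphic) auto
next
  case False
  then have "norm (inverse z) > 1"
    using z by (simp add: norm_inverse one_less_inverse)
  then have "\<forall>\<^sub>F y in at (inverse z). continuous_invertible_at W y"
    using W unfolding GL_mero_inf_def by (intro GL_mero_eventually_continuous_invertible_at) auto
  from eventually_compose_filterlim[OF this filterlim_inverse_at[OF False]]
  have "\<forall>\<^sub>F y in at z. continuous_invertible_at W (inverse y)" .
  moreover have "\<forall>\<^sub>F y in at z. y \<noteq> 0"
    using False by (simp add: eventually_neq_at_within)
  ultimately show ?thesis
    by eventually_elim
      (rule continuous_invertible_at_compose[where F = W and f = inverse],
       auto intro: continuous_intros)
qed

section \<open>The logarithmic chart of the cover\<close>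

lemma ltilde_lexp [simp]: "ltilde (lexp u) = u"
  unfolding ltilde_def lexp_def by (simp add: complex_eq_iff)

lemma lexp_ltilde:
  assumes "x \<in> ctilde" shows "lexp (ltilde x) = x"
proof -
  obtain r b where x: "x = (complex_of_real r * cis b, b)" "r > 0"
    using assms unfolding ctilde_def by auto
  then have "ltilde x = complex_of_real (ln r) + \<i> * complex_of_real b"
    unfolding ltilde_def by (simp add: norm_mult)
  then show ?thesis
    using x by (simp add: lexp_def exp_add cis_conv_exp[symmetric] exp_of_real)
qed

lemma lexp_ctilde [simp]: "lexp u \<in> ctilde"
  unfolding lexp_def ctilde_def by (auto intro!: exI[of _ "exp (Re u)"] simp: exp_eq_polar)

lemma in_ltilde_image: "lexp u \<in> U \<Longrightarrow> u \<in> ltilde ` U"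
  by (metis ltilde_lexp image_eqI)

lemma ltilde_ctilde: "ltilde ` ctilde = UNIV"
  using in_ltilde_image lexp_ctilde by blast

lemma lexp_Sigma0_iff [simp]: "lexp u \<in> Sigma0 \<longleftrightarrow> Re u < 0"
  using lexp_ctilde[of u] unfolding Sigma0_def lexp_def by simp

lemma lexp_SigmaInf_iff [simp]: "lexp u \<in> SigmaInf \<longleftrightarrow> Re u > 0"
  using lexp_ctilde[of u] unfolding SigmaInf_def lexp_def by simp

lemma piT_lexp [simp]: "piT (lexp u) = exp u"
  unfolding piT_def lexp_def by simp

lemma piT_eq_exp_ltilde: "x \<in> ctilde \<Longrightarrow> piT x = exp (ltilde x)"
  by (metis lexp_ltilde piT_lexp)

lemma phiT_lexp: "phiT p (lexp u) = lexp (of_nat p * u)"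
  unfolding phiT_def lexp_def by (simp add: exp_of_nat_mult)

lemma GL_mero_cov_iff: "GL_mero_cov M U \<longleftrightarrow> GL_mero (\<lambda>u. M (lexp u)) (ltilde ` U)"
  unfolding GL_mero_cov_def GL_mero_def mero_cov_def o_def ..

lemma not_has_invertible_limit_if_sing_locus:
  "x \<in> sing_locus M U \<Longrightarrow> \<not> has_invertible_limit (\<lambda>u. M (lexp u)) (ltilde x)"
  unfolding sing_locus_def
  using has_invertible_limit_not_pole has_invertible_limit_not_det_tendsto_0 by blast

lemma Epow_power: "e \<in> E \<Longrightarrow> e ^ (p ^ j) \<in> Epow p E (int j)"
  unfolding Epow_def by auto

lemma Epow_root: "z ^ (p ^ j) \<in> E \<Longrightarrow> z \<in> Epow p E (- int j)"
  unfolding Epow_def by (cases "j = 0") auto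

lemma Epow_inverse:
  assumes "z \<in> Epow p E k" shows "inverse z \<in> Epow p (inverse ` E) k"
proof (cases "k \<ge> 0")
  case True
  then obtain e where "e \<in> E" "z = e ^ (p ^ nat k)" using assms unfolding Epow_def by auto
  then have "inverse z = inverse e ^ (p ^ nat k)" by (simp add: power_inverse)
  then show ?thesis using True \<open>e \<in> E\<close> unfolding Epow_def by auto
next
  case False
  then show ?thesis using assms unfolding Epow_def by (auto simp: power_inverse)
qed

section \<open>The dilation argument on a half plane\<close>

lemma finite_compact_not_eventually:
  fixes K :: "'a::t2_space set"
  assumes "compact K" "\<And>z. \<forall>\<^sub>F v in at z. P v"
  shows "finite {z \<in> K. \<not> P z}"
proof -
  have "\<not> z islimpt {z. \<not> P z}" for z
    using assms(2)[of z] by (simp add: islimpt_conv_frequently_at frequently_def)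
  then have "finite (K \<inter> {z. \<not> P z})" by (intro finite_not_islimpt_in_compact assms(1))
  then show ?thesis by (simp add: Int_def)
qed

lemma exists_funpow_of_escape:
  assumes "B x" "\<not> B ((f ^^ n) x)" "\<And>y. B y \<Longrightarrow> Q y \<or> B (f y)"
  shows "\<exists>j. Q ((f ^^ j) x)"
  using assms(1,2)
proof (induction n arbitrary: x)
  case (Suc n)
  then show ?case
    using assms(3)[of x] Suc.IH[of "f x"] by (metis funpow_0 funpow_Suc_right o_apply)
qed simp

locale half_plane_connection =
  fixes p :: nat and A0 A1 :: "complex^'n^'n" and m w V :: "complex \<Rightarrow> complex^'n^'n"
  assumes p_ge_2: "p \<ge> 2"
    and det_A0: "det A0 \<noteq> 0" and det_A1: "det A1 \<noteq> 0"
    and m_dilation: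
      "\<And>u. Re u < 0 \<Longrightarrow> \<forall>\<^sub>F v in at u. m (of_nat p * v) = A1 ** m v ** matrix_inv A0"
    and w_m: "\<And>u. Re u < 0 \<Longrightarrow> \<forall>\<^sub>F v in at u. w v ** m v = V (exp v)"
    and w_regular: "\<And>u. \<forall>\<^sub>F v in at u. continuous_invertible_at w v"
    and V_regular: "\<And>z. z \<in> ball 0 1 \<Longrightarrow> \<forall>\<^sub>F y in at z. continuous_invertible_at V y"
begin

definition T :: "complex \<Rightarrow> complex^'n^'n" where
  "T v = V (exp (of_nat p * v)) ** A0 ** matrix_inv (V (exp v))"

definition Tsing :: "complex set" where
  "Tsing = exp ` {v. Re v < 0 \<and> \<not> has_invertible_limit T v}"

lemma p_gt_1: "real p > 1"
  using p_ge_2 by simp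

lemma of_nat_p_nz: "(of_nat p :: complex) \<noteq> 0"
  using p_ge_2 by simp

lemma Re_scaled_neg: "Re v < 0 \<Longrightarrow> Re (of_nat p * v) < 0"
  using p_gt_1 by (simp add: mult_pos_neg)

lemma filterlim_scale_at: "filterlim (times (of_nat p)) (at (of_nat p * v)) (at (v::complex))"
  using filterlim_times_at[OF of_nat_p_nz] .

lemma has_invertible_limit_scaled:
  fixes F :: "complex \<Rightarrow> complex^'n^'n"
  shows "has_invertible_limit F (of_nat p * v) \<Longrightarrow> has_invertible_limit (\<lambda>y. F (of_nat p * y)) v"
  using has_invertible_limit_compose[of F "times (of_nat p)"] filterlim_scale_at by simp

lemma has_invertible_limit_unscaled:
  fixes F :: "complex \<Rightarrow> complex^'n^'n"
  assumes "has_invertible_limit (\<lambda>y. F (of_nat p * y)) v"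
  shows "has_invertible_limit F (of_nat p * v)"
proof -
  have nz: "inverse (of_nat p :: complex) \<noteq> 0"
    using of_nat_p_nz by simp
  have "has_invertible_limit (\<lambda>y. F (of_nat p * y)) (inverse (of_nat p) * (of_nat p * v))"
    using assms of_nat_p_nz by (simp add: mult.assoc[symmetric])
  from has_invertible_limit_compose[OF this filterlim_times_at[OF nz]] show ?thesis
    using of_nat_p_nz by (simp add: mult.assoc[symmetric])
qed

lemma eventually_relations:
  assumes "Re u < 0"
  shows "\<forall>\<^sub>F v in at u.
    m (of_nat p * v) = A1 ** m v ** matrix_inv A0 \<and> w v ** m v = V (exp v) \<and>
    w (of_nat p * v) ** m (of_nat p * v) = V (exp (of_nat p * v)) \<and>
    det (w v) \<noteq> 0 \<and> det (V (exp v)) \<noteq> 0"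
proof -
  have "\<forall>\<^sub>F v in at u. w (of_nat p * v) ** m (of_nat p * v) = V (exp (of_nat p * v))"
    using eventually_compose_filterlim[OF w_m[OF Re_scaled_neg[OF assms]] filterlim_scale_at]
    by simp
  moreover have "exp u \<in> ball 0 1"
    using assms by simp
  from eventually_compose_filterlim[OF V_regular[OF this] filterlim_exp_at]
  have "\<forall>\<^sub>F v in at u. det (V (exp v)) \<noteq> 0"
    by eventually_elim (simp add: continuous_invertible_at_def)
  moreover have "\<forall>\<^sub>F v in at u. det (w v) \<noteq> 0"
    using w_regular[of u] by eventually_elim (simp add: continuous_invertible_at_def)
  ultimately show ?thesis
    using m_dilation[OF assms] w_m[OF assms] by eventually_elim blast
qed

lemma eventually_m_eq:
  assumes "Re u < 0"
  shows "\<forall>\<^sub>F v in at u. m v = matrix_inv (w v) ** V (exp v)"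
  using eventually_relations[OF assms]
proof eventually_elim
  case (elim v)
  then have "m v = (matrix_inv (w v) ** w v) ** m v"
    by (simp add: matrix_inv_det_nz)
  also have "\<dots> = matrix_inv (w v) ** V (exp v)"
    using elim by (simp add: matrix_mul_assoc[symmetric])
  finally show ?case .
qed

lemma eventually_T_eq:
  assumes "Re u < 0"
  shows "\<forall>\<^sub>F v in at u. T v = w (of_nat p * v) ** A1 ** matrix_inv (w v)"
  using eventually_relations[OF assms] eventually_m_eq[OF assms]
proof eventually_elim
  case (elim v)
  let ?iV = "matrix_inv (V (exp v))"
  have "T v = w (of_nat p * v) ** A1 ** matrix_inv (w v) **
              (V (exp v) ** (matrix_inv A0 ** A0) ** ?iV)"
    using elim unfolding T_def by (metis matrix_mul_assoc)
  also have "\<dots> = w (of_nat p * v) ** A1 ** matrix_inv (w v)"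
    using elim det_A0 by (simp add: matrix_inv_det_nz)
  finally show ?case .
qed

lemma eventually_T_V_eq:
  assumes "Re u < 0"
  shows "\<forall>\<^sub>F v in at u. T v ** V (exp v) = V (exp (of_nat p * v)) ** A0"
  using eventually_relations[OF assms]
proof eventually_elim
  case (elim v)
  have "T v ** V (exp v) =
        V (exp (of_nat p * v)) ** A0 ** (matrix_inv (V (exp v)) ** V (exp v))"
    unfolding T_def by (simp add: matrix_mul_assoc)
  with elim show ?case
    by (simp add: matrix_inv_det_nz)
qed

lemma has_invertible_limit_T:
  assumes "Re v < 0" "has_invertible_limit w v" "has_invertible_limit w (of_nat p * v)"
  shows "has_invertible_limit T v"
proof -
  have "has_invertible_limit (\<lambda>y. w (of_nat p * y) ** A1 ** matrix_inv (w y)) v"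
    using assms det_A1
    by (intro has_invertible_limit_mult has_invertible_limit_matrix_inv
        has_invertible_limit_const has_invertible_limit_scaled)
  then show ?thesis
    by (rule has_invertible_limit_cong)
      (use eventually_T_eq[OF assms(1)] in \<open>eventually_elim, simp\<close>)
qed

lemma has_invertible_limit_m:
  assumes "Re u < 0" "has_invertible_limit w u" "has_invertible_limit (\<lambda>v. V (exp v)) u"
  shows "has_invertible_limit m u"
proof -
  have "has_invertible_limit (\<lambda>v. matrix_inv (w v) ** V (exp v)) u"
    using assms by (intro has_invertible_limit_mult has_invertible_limit_matrix_inv)
  then show ?thesis
    by (rule has_invertible_limit_cong)
      (use eventually_m_eq[OF assms(1)] in \<open>eventually_elim, simp\<close>)
qed

lemma has_invertible_limit_V_exp_descent:
  assumes "Re v < 0" "has_invertible_limit T v"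
    and "has_invertible_limit (\<lambda>y. V (exp y)) (of_nat p * v)"
  shows "has_invertible_limit (\<lambda>y. V (exp y)) v"
proof -
  have "has_invertible_limit (\<lambda>y. matrix_inv (T y) ** (V (exp (of_nat p * y)) ** A0)) v"
    using assms det_A0
    by (intro has_invertible_limit_mult has_invertible_limit_matrix_inv
        has_invertible_limit_const has_invertible_limit_scaled[where F = "\<lambda>y. V (exp y)"])
  moreover have "\<forall>\<^sub>F y in at v. matrix_inv (T y) ** (V (exp (of_nat p * y)) ** A0) = V (exp y)"
    using eventually_T_V_eq[OF assms(1)] has_invertible_limit_eventually_det_nz[OF assms(2)]
  proof eventually_elim
    case (elim y)
    then have "V (exp y) = (matrix_inv (T y) ** T y) ** V (exp y)"
      by (simp add: matrix_inv_det_nz)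
    also have "\<dots> = matrix_inv (T y) ** (V (exp (of_nat p * y)) ** A0)"
      using elim by (simp add: matrix_mul_assoc[symmetric])
    finally show ?case by simp
  qed
  ultimately show ?thesis by (rule has_invertible_limit_cong)
qed

lemma has_invertible_limit_w_ascent:
  assumes "Re v < 0" "has_invertible_limit T v" "has_invertible_limit w v"
  shows "has_invertible_limit w (of_nat p * v)"
proof -
  have "has_invertible_limit (\<lambda>y. T y ** w y ** matrix_inv A1) v"
    using assms det_A1
    by (intro has_invertible_limit_mult has_invertible_limit_matrix_inv has_invertible_limit_const)
  moreover have "\<forall>\<^sub>F y in at v. T y ** w y ** matrix_inv A1 = w (of_nat p * y)"
    using eventually_T_eq[OF assms(1)] eventually_relations[OF assms(1)]
  proof eventually_elim
    case (elim y)
    then have "T y ** w y ** matrix_inv A1 =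
               w (of_nat p * y) ** (A1 ** (matrix_inv (w y) ** w y) ** matrix_inv A1)"
      by (simp add: matrix_mul_assoc)
    with elim det_A1 show ?case by (simp add: matrix_inv_det_nz)
  qed
  ultimately have "has_invertible_limit (\<lambda>y. w (of_nat p * y)) v"
    by (rule has_invertible_limit_cong)
  then show ?thesis by (rule has_invertible_limit_unscaled)
qed

lemma T_exp_cong: "exp y = exp y' \<Longrightarrow> T y = T y'"
  unfolding T_def by (simp add: exp_of_nat_mult)

lemma has_invertible_limit_T_exp_cong:
  assumes "exp v = exp v'" "has_invertible_limit T v"
  shows "has_invertible_limit T v'"
proof -
  have "has_invertible_limit (\<lambda>y. T (y + (v - v'))) v'"
    using has_invertible_limit_compose[OF _ filterlim_plus_at, of T v' "v - v'"] assms(2)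
    by simp
  moreover have "T (y + (v - v')) = T y" for y
    by (rule T_exp_cong) (use assms(1) in \<open>simp add: exp_add exp_diff\<close>)
  ultimately show ?thesis by simp
qed

lemma V_exp_regular_far_left:
  obtains c where "c < 0" "\<And>v. Re v < c \<Longrightarrow> continuous_invertible_at (\<lambda>y. V (exp y)) v"
proof -
  obtain d where d: "d > 0" "\<And>y. y \<noteq> 0 \<Longrightarrow> norm y < d \<Longrightarrow> continuous_invertible_at V y"
    using V_regular[of 0] unfolding eventually_at by (auto simp: dist_norm)
  have "continuous_invertible_at (\<lambda>y. V (exp y)) v" if "Re v < min (-1) (ln d)" for v
  proof (rule continuous_invertible_at_compose[where F = V and f = exp])
    have "norm (exp v) = exp (Re v)" by simp
    also have "\<dots> < exp (ln d)" using that by simp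
    finally have "norm (exp v) < d" using d(1) by simp
    then show "continuous_invertible_at V (exp v)" using d(2) by simp
  qed (intro continuous_intros)
  then show ?thesis using that[of "min (-1) (ln d)"] by simp
qed

lemma has_invertible_limit_T_far_left:
  assumes c: "\<And>v. Re v < c \<Longrightarrow> continuous_invertible_at (\<lambda>y. V (exp y)) v" "c < 0"
    and v: "Re v < c"
  shows "has_invertible_limit T v"
proof -
  have "Re (of_nat p * v) = real p * Re v" by simp
  also have "\<dots> \<le> 1 * Re v"
    using p_gt_1 v c(2) by (intro mult_right_mono_neg) auto
  finally have "Re (of_nat p * v) < c" using v by simp
  then have "has_invertible_limit (\<lambda>y. V (exp y)) (of_nat p * v)"
    using c(1) continuous_invertible_at_imp_has_invertible_limit by blast
  moreover have "has_invertible_limit (\<lambda>y. V (exp y)) v"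
    using c(1) v continuous_invertible_at_imp_has_invertible_limit by blast
  ultimately have "has_invertible_limit
      (\<lambda>y. V (exp (of_nat p * y)) ** A0 ** matrix_inv (V (exp y))) v"
    using det_A0
    by (intro has_invertible_limit_mult has_invertible_limit_matrix_inv
        has_invertible_limit_const has_invertible_limit_scaled[where F = "\<lambda>y. V (exp y)"])
  then show ?thesis by (simp add: T_def[abs_def])
qed

lemma finite_Tsing: "finite Tsing"
proof -
  obtain c where c: "c < 0" "\<And>v. Re v < c \<Longrightarrow> continuous_invertible_at (\<lambda>y. V (exp y)) v"
    using V_exp_regular_far_left by blast
  define K where "K = cbox (Complex c (-pi)) (Complex 0 pi)"
  define B where "B = {v \<in> K. \<not> continuous_invertible_at w v} \<union>
                      {v \<in> K. \<not> continuous_invertible_at w (of_nat p * v)}"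
  have "compact K" unfolding K_def by simp
  moreover have "\<forall>\<^sub>F y in at v. continuous_invertible_at w (of_nat p * y)" for v
    using eventually_compose_filterlim[OF w_regular filterlim_scale_at] .
  ultimately have "finite B"
    unfolding B_def using finite_compact_not_eventually w_regular by blast
  moreover have "Tsing \<subseteq> exp ` B"
  proof
    fix z assume "z \<in> Tsing"
    then obtain v where v: "z = exp v" "Re v < 0" "\<not> has_invertible_limit T v"
      unfolding Tsing_def by auto
    define v' where "v' = Ln z" \<comment> \<open>moves the singularity v into the strip, keeping exp v\<close>
    have z0: "z \<noteq> 0" using v(1) by simp
    have "exp v' = z" using z0 unfolding v'_def by simp
    have Re_v': "Re v' = Re v" using z0 unfolding v'_def v(1) by simp
    have not_T: "\<not> has_invertible_limit T v'"
      using has_invertible_limit_T_exp_cong[of v' v] v \<open>exp v' = z\<close> by auto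
    then have "c \<le> Re v'"
      using has_invertible_limit_T_far_left[OF c(2,1)] by force
    then have "v' \<in> K"
      using Re_v' v(2) mpi_less_Im_Ln[OF z0] Im_Ln_le_pi[OF z0]
      unfolding K_def cbox_complex_eq v'_def by auto
    moreover have "\<not> continuous_invertible_at w v' \<or> \<not> continuous_invertible_at w (of_nat p * v')"
      using has_invertible_limit_T[of v'] not_T Re_v' v(2)
        continuous_invertible_at_imp_has_invertible_limit by auto
    ultimately show "z \<in> exp ` B"
      unfolding B_def using \<open>exp v' = z\<close> by auto
  qed
  ultimately show ?thesis
    using finite_subset by blast
qed

lemma Tsing_subset: "Tsing \<subseteq> ball 0 1 - {0}"
  unfolding Tsing_def by auto

lemma has_invertible_limit_V_exp_dilated:
  assumes "Re v < 0"
  obtains n where "has_invertible_limit (\<lambda>y. V (exp y)) (of_nat p ^ n * v)"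
proof -
  obtain c where c: "c < 0" "\<And>v. Re v < c \<Longrightarrow> continuous_invertible_at (\<lambda>y. V (exp y)) v"
    using V_exp_regular_far_left by blast
  obtain n where "c / Re v < real p ^ n"
    using real_arch_pow[OF p_gt_1] by blast
  then have "Re (of_nat p ^ n * v) < c"
    using assms by (simp add: neg_divide_less_eq flip: of_nat_power)
  then show ?thesis
    using that c(2) continuous_invertible_at_imp_has_invertible_limit by blast
qed

lemma has_invertible_limit_w_shrunk:
  assumes "y \<noteq> 0"
  obtains n where "has_invertible_limit w (inverse (of_nat p) ^ n * y)"
proof -
  obtain \<delta> where \<delta>: "\<delta> > 0" "\<And>y. y \<noteq> 0 \<Longrightarrow> norm y < \<delta> \<Longrightarrow> continuous_invertible_at w y"
    using w_regular[of 0] unfolding eventually_at by (auto simp: dist_norm)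
  obtain n where "norm y / \<delta> < real p ^ n"
    using real_arch_pow[OF p_gt_1] by blast
  then have "norm y / real p ^ n < \<delta>"
    using \<delta>(1) p_gt_1 by (simp add: divide_less_eq mult.commute)
  then have "norm (inverse (of_nat p) ^ n * y) < \<delta>"
    by (simp add: norm_mult norm_power norm_inverse divide_inverse mult.commute power_inverse)
  moreover have "inverse (of_nat p) ^ n * y \<noteq> 0"
    using assms of_nat_p_nz by auto
  ultimately show ?thesis
    using that \<delta>(2) continuous_invertible_at_imp_has_invertible_limit by blast
qed

lemma V_exp_singular_descent:
  assumes "Re v < 0" "\<not> has_invertible_limit (\<lambda>y. V (exp y)) v"
  shows "\<exists>j. exp v ^ (p ^ j) \<in> Tsing"
proof -
  let ?B = "\<lambda>y. Re y < 0 \<and> \<not> has_invertible_limit (\<lambda>y. V (exp y)) y"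
  obtain n where "has_invertible_limit (\<lambda>y. V (exp y)) (of_nat p ^ n * v)"
    using has_invertible_limit_V_exp_dilated[OF assms(1)] by blast
  then have "\<not> ?B ((times (of_nat p) ^^ n) v)"
    by (simp add: funpow_times_power[where f = "\<lambda>_. n"])
  moreover have "?B y \<Longrightarrow> exp y \<in> Tsing \<or> ?B (of_nat p * y)" for y
    using has_invertible_limit_V_exp_descent Re_scaled_neg unfolding Tsing_def by blast
  ultimately obtain j where "exp ((times (of_nat p) ^^ j) v) \<in> Tsing"
    using assms exists_funpow_of_escape[where B = ?B and f = "times (of_nat p)"
        and Q = "\<lambda>y. exp y \<in> Tsing"]
    by blast
  then show ?thesis
    by (auto simp: funpow_times_power[where f = "\<lambda>_. j"] exp_of_nat_mult simp flip: of_nat_power)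
qed

lemma w_singular_descent:
  assumes "Re y < 0" "\<not> has_invertible_limit w y"
  shows "\<exists>j. \<exists>e \<in> Tsing. exp y = e ^ (p ^ j)"
proof -
  let ?q = "inverse (of_nat p) :: complex"
  let ?B = "\<lambda>y. Re y < 0 \<and> \<not> has_invertible_limit w y"
  have "y \<noteq> 0" using assms(1) by auto
  then obtain n where "has_invertible_limit w (?q ^ n * y)"
    using has_invertible_limit_w_shrunk by blast
  then have "\<not> ?B ((times ?q ^^ n) y)"
    by (simp add: funpow_times_power[where f = "\<lambda>_. n"])
  moreover have "exp (?q * y) \<in> Tsing \<or> ?B (?q * y)" if "?B y" for y
  proof -
    have y: "of_nat p * (?q * y) = y"
      using of_nat_p_nz by simp
    have "Re (?q * y) < 0"
      using that p_gt_1 by (simp add: divide_less_0_iff mult_pos_neg)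
    then show ?thesis
      using that has_invertible_limit_w_ascent[of "?q * y"] y unfolding Tsing_def by auto
  qed
  ultimately obtain j where j: "exp (?q * (times ?q ^^ j) y) \<in> Tsing"
    using assms exists_funpow_of_escape[where B = ?B and f = "times ?q"
        and Q = "\<lambda>y. exp (?q * y) \<in> Tsing"]
    by blast
  have "exp (?q * (times ?q ^^ j) y) ^ (p ^ Suc j) =
        exp (of_nat (p ^ Suc j) * (?q * (times ?q ^^ j) y))"
    by (rule exp_of_nat_mult[symmetric])
  also have "\<dots> = exp y"
    using of_nat_p_nz
    by (simp add: funpow_times_power[where f = "\<lambda>_. j"] power_inverse field_simps)
  finally show ?thesis using j by metis
qed

lemma m_singular_in_Epow:
  assumes "Re u < 0" "\<not> has_invertible_limit m u"
  shows "\<exists>k. exp u \<in> Epow p Tsing k"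
proof -
  consider "\<not> has_invertible_limit w u" | "\<not> has_invertible_limit (\<lambda>v. V (exp v)) u"
    using has_invertible_limit_m assms by blast
  then show ?thesis
  proof cases
    case 1
    then obtain j e where "e \<in> Tsing" "exp u = e ^ (p ^ j)"
      using w_singular_descent assms(1) by blast
    then show ?thesis using Epow_power by metis
  next
    case 2
    then obtain j where "exp u ^ (p ^ j) \<in> Tsing"
      using V_exp_singular_descent assms(1) by blast
    then show ?thesis using Epow_root by blast
  qed
qed

end

section \<open>Both half planes of an object of the category\<close>

lemma half_plane_connection_at_zero:
  assumes "p \<ge> 2" "is_object_C p A0 A1 Ainf M0 Minf"
  shows "\<exists>w V. half_plane_connection p A0 A1 (\<lambda>u. M0 (lexp u)) w V"
proof -
  note obj = assms(2)[unfolded is_object_C_def]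
  have dilation: "mero_eq_cov (\<lambda>x. M0 (phiT p x)) (\<lambda>x. A1 ** M0 x ** matrix_inv A0) Sigma0"
    using obj by blast
  obtain W1 W0 where W1: "GL_mero_cov W1 ctilde" and W0: "GL_mero W0 (ball 0 1)"
    and W1_M0: "mero_eq_cov (\<lambda>x. W1 x ** M0 x) (\<lambda>x. W0 (piT x)) Sigma0"
    using obj by blast
  have "half_plane_connection p A0 A1 (\<lambda>u. M0 (lexp u)) (\<lambda>u. W1 (lexp u)) W0"
  proof
    show "p \<ge> 2" "det A0 \<noteq> 0" "det A1 \<noteq> 0"
      using assms(1) obj invertible_det_nz by blast+
    fix u :: complex
    assume "Re u < 0"
    then have u: "u \<in> ltilde ` Sigma0"
      by (intro in_ltilde_image) simp
    show "\<forall>\<^sub>F v in at u. M0 (lexp (of_nat p * v)) = A1 ** M0 (lexp v) ** matrix_inv A0"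
      using dilation u unfolding mero_eq_cov_def phiT_lexp by blast
    show "\<forall>\<^sub>F v in at u. W1 (lexp v) ** M0 (lexp v) = W0 (exp v)"
      using W1_M0 u unfolding mero_eq_cov_def piT_lexp by blast
  next
    show "\<forall>\<^sub>F v in at u. continuous_invertible_at (\<lambda>u. W1 (lexp u)) v" for u
      using W1 unfolding GL_mero_cov_iff ltilde_ctilde
      by (intro GL_mero_eventually_continuous_invertible_at) auto
    show "\<forall>\<^sub>F y in at z. continuous_invertible_at W0 y" if "z \<in> ball 0 1" for z
      using W0 that by (rule GL_mero_eventually_continuous_invertible_at)
  qed
  then show ?thesis by blast
qed

lemma half_plane_connection_at_infinity:
  assumes "p \<ge> 2" "is_object_C p A0 A1 Ainf M0 Minf"
  shows "\<exists>w V. half_plane_connection p Ainf A1 (\<lambda>u. Minf (lexp (- u))) w V"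
proof -
  note obj = assms(2)[unfolded is_object_C_def]
  have dilation:
    "mero_eq_cov (\<lambda>x. Minf (phiT p x)) (\<lambda>x. A1 ** Minf x ** matrix_inv Ainf) SigmaInf"
    using obj by blast
  obtain W1 Winf where W1: "GL_mero_cov W1 ctilde" and Winf: "GL_mero_inf Winf"
    and W1_Minf: "mero_eq_cov (\<lambda>x. W1 x ** Minf x) (\<lambda>x. Winf (piT x)) SigmaInf"
    using obj by blast
  have "half_plane_connection p Ainf A1 (\<lambda>u. Minf (lexp (- u)))
          (\<lambda>u. W1 (lexp (- u))) (\<lambda>z. Winf (inverse z))"
  proof
    show "p \<ge> 2" "det Ainf \<noteq> 0" "det A1 \<noteq> 0"
      using assms(1) obj invertible_det_nz by blast+
    fix u :: complex
    assume "Re u < 0"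
    then have u: "- u \<in> ltilde ` SigmaInf"
      by (intro in_ltilde_image) simp
    have "\<forall>\<^sub>F y in at (- u). Minf (lexp (of_nat p * y)) = A1 ** Minf (lexp y) ** matrix_inv Ainf"
      using dilation u unfolding mero_eq_cov_def phiT_lexp by blast
    from eventually_compose_filterlim[OF this filterlim_uminus_at]
    show "\<forall>\<^sub>F v in at u.
            Minf (lexp (- (of_nat p * v))) = A1 ** Minf (lexp (- v)) ** matrix_inv Ainf"
      by simp
    have "\<forall>\<^sub>F y in at (- u). W1 (lexp y) ** Minf (lexp y) = Winf (exp y)"
      using W1_Minf u unfolding mero_eq_cov_def piT_lexp by blast
    from eventually_compose_filterlim[OF this filterlim_uminus_at]
    show "\<forall>\<^sub>F v in at u. W1 (lexp (- v)) ** Minf (lexp (- v)) = Winf (inverse (exp v))"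
      by (simp add: exp_minus)
  next
    fix u :: complex
    have "\<forall>\<^sub>F y in at (- u). continuous_invertible_at (\<lambda>u. W1 (lexp u)) y"
      using W1 unfolding GL_mero_cov_iff ltilde_ctilde
      by (intro GL_mero_eventually_continuous_invertible_at) auto
    from eventually_compose_filterlim[OF this filterlim_uminus_at]
    show "\<forall>\<^sub>F v in at u. continuous_invertible_at (\<lambda>u. W1 (lexp (- u))) v"
      by eventually_elim
        (rule continuous_invertible_at_compose[where F = "\<lambda>u. W1 (lexp u)" and f = uminus],
         auto intro: continuous_intros)
  next
    show "\<forall>\<^sub>F y in at z. continuous_invertible_at (\<lambda>z. Winf (inverse z)) y"
      if "z \<in> ball 0 1" for z
      using Winf that by (rule GL_mero_inf_eventually_continuous_invertible_at_inverse)
  qed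
  then show ?thesis by blast
qed

lemma sing_locus_Sigma0_subset_Etilde:
  assumes "\<And>u. Re u < 0 \<Longrightarrow> \<not> has_invertible_limit (\<lambda>u. M (lexp u)) u \<Longrightarrow>
             \<exists>k. exp u \<in> Epow p E k"
  shows "sing_locus M Sigma0 \<subseteq> Etilde p E"
proof
  fix x assume x: "x \<in> sing_locus M Sigma0"
  then have "x \<in> Sigma0" by (simp add: sing_locus_def)
  then have xc: "x \<in> ctilde" unfolding Sigma0_def by simp
  with \<open>x \<in> Sigma0\<close> have "Re (ltilde x) < 0"
    by (metis lexp_ltilde lexp_Sigma0_iff)
  then obtain k where "exp (ltilde x) \<in> Epow p E k"
    using assms not_has_invertible_limit_if_sing_locus[OF x] by blast
  then show "x \<in> Etilde p E"
    unfolding Etilde_def using xc piT_eq_exp_ltilde by auto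
qed

lemma sing_locus_SigmaInf_subset_Etilde:
  assumes "\<And>u. Re u < 0 \<Longrightarrow> \<not> has_invertible_limit (\<lambda>u. M (lexp (- u))) u \<Longrightarrow>
             \<exists>k. exp u \<in> Epow p E k"
  shows "sing_locus M SigmaInf \<subseteq> Etilde p (inverse ` E)"
proof
  fix x assume x: "x \<in> sing_locus M SigmaInf"
  then have "x \<in> SigmaInf" by (simp add: sing_locus_def)
  then have xc: "x \<in> ctilde" unfolding SigmaInf_def by simp
  with \<open>x \<in> SigmaInf\<close> have "Re (- ltilde x) < 0"
    by (metis lexp_ltilde lexp_SigmaInf_iff neg_less_0_iff_less uminus_complex.sel(1))
  moreover have "\<not> has_invertible_limit (\<lambda>u. M (lexp (- u))) (- ltilde x)"
  proof
    assume "has_invertible_limit (\<lambda>u. M (lexp (- u))) (- ltilde x)"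
    from has_invertible_limit_compose[OF _ filterlim_uminus_at, of "\<lambda>u. M (lexp (- u))"] this
    show False using not_has_invertible_limit_if_sing_locus[OF x] by simp
  qed
  ultimately obtain k where "exp (- ltilde x) \<in> Epow p E k"
    using assms by blast
  then have "exp (ltilde x) \<in> Epow p (inverse ` E) k"
    using Epow_inverse by (fastforce simp: exp_minus)
  then show "x \<in> Etilde p (inverse ` E)"
    unfolding Etilde_def using xc piT_eq_exp_ltilde by auto
qed

lemma inverse_image_punctured_disc:
  fixes E :: "complex set"
  assumes "E \<subseteq> ball 0 1 - {0}"
  shows "inverse ` E \<subseteq> - cball 0 1"
proof
  fix y assume "y \<in> inverse ` E"
  then obtain e where e: "e \<in> E" "y = inverse e" by blast
  then have "0 < norm e" "norm e < 1" using assms by auto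
  then have "1 < inverse (norm e)" by (rule one_less_inverse)
  then show "y \<in> - cball 0 1" using e(2) by (simp add: norm_inverse)
qed

theorem mainTheorem10:
  fixes p :: nat
    and A0 A1 Ainf :: "complex^'n^'n"
    and M0 Minf :: "complex \<times> real \<Rightarrow> complex^'n^'n"
  assumes "p \<ge> 2"
    and "is_object_C p A0 A1 Ainf M0 Minf"
  shows "\<exists>E0 Einf. finite E0 \<and> E0 \<subseteq> ball 0 1 - {0} \<and>
                   finite Einf \<and> Einf \<subseteq> - cball 0 1 \<and>
                   sing_locus M0 Sigma0 \<subseteq> Etilde p E0 \<and>
                   sing_locus Minf SigmaInf \<subseteq> Etilde p Einf"
proof -
  obtain w V where "half_plane_connection p A0 A1 (\<lambda>u. M0 (lexp u)) w V"
    using half_plane_connection_at_zero[OF assms] by blast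
  then interpret zero: half_plane_connection p A0 A1 "\<lambda>u. M0 (lexp u)" w V .
  obtain w' V' where "half_plane_connection p Ainf A1 (\<lambda>u. Minf (lexp (- u))) w' V'"
    using half_plane_connection_at_infinity[OF assms] by blast
  then interpret infinity: half_plane_connection p Ainf A1 "\<lambda>u. Minf (lexp (- u))" w' V' .
  have "sing_locus M0 Sigma0 \<subseteq> Etilde p zero.Tsing"
    by (rule sing_locus_Sigma0_subset_Etilde) (rule zero.m_singular_in_Epow)
  moreover have "sing_locus Minf SigmaInf \<subseteq> Etilde p (inverse ` infinity.Tsing)"
    by (rule sing_locus_SigmaInf_subset_Etilde) (rule infinity.m_singular_in_Epow)
  moreover have "inverse ` infinity.Tsing \<subseteq> - cball 0 1"
    using infinity.Tsing_subset by (rule inverse_image_punctured_disc)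
  ultimately show ?thesis
    using zero.finite_Tsing zero.Tsing_subset infinity.finite_Tsing by blast
qed

end
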